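(* Let $(\mathrm{Con},\sqsubseteq,(s_i)_{i\in G})$ be a spatial constraint system with distributed spaces $(\Delta_I)_{I\subseteq G}$. Then: (1) $(\Delta_I)_{I\subseteq G}$ is a group distribution candidate; (2) if $(d_I)_{I\subseteq G}$ is any group distribution candidate, then $d_I\preceq \Delta_I$ for every $I\subseteq G$.
   Context: A constraint system (cs) is a complete lattice $(\mathrm{Con},\sqsubseteq)$, with join $\sqcup$, meet $\sqcap$, bottom $\mathit{true}$ and top $\mathit{false}$; $d\sqsupseteq c$ means $c\sqsubseteq d$. A space function over the cs is a self-map $f:\mathrm{Con}\to\mathrm{Con}$ that is continuous (preserves the join of every directed set) and satisfies $f(\mathit{true})=\mathit{true}$ and $f(c\sqcup d)=f(c)\sqcup f(d)$ for all $c,d$. Let $\mathcal{S}(\mathrm{Con})$ be the set of space functions, ordered pointwise: $f\preceq g$ iff $f(c)\sqsubseteq g(c)$ for all $c\in\mathrm{Con}$. A spatial constraint system (scs) $(\mathrm{Con},\sqsubseteq,(s_i)_{i\in G})$ is a cs together with a family of space functions $s_i$ indexed by an arbitrary (possibly infinite) set $G$ of agents. Its distributed spaces are $\Delta_I=\max\{f\in\mathcal{S}(\mathrm{Con}) : f\preceq s_i \text{ for every } i\in I\}$ for $I\subseteq G$ (this greatest element exists). A group distribution candidate is a family $(d_I)_{I\subseteq G}$ of self-maps on $\mathrm{Con}$ such that for all $I,J\subseteq G$: (D.1) $d_I$ is a space function; (D.2) $d_I=s_i$ if $I=\{i\}$; (D.3) $d_J\preceq d_I$ whenever $I\subseteq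 J$. *)

theory Defs
  imports Main
begin

text \<open>The constraint system is a complete lattice type 'c: the order is \<le> (entailment),
  join is sup, meet is inf, true is bot, false is top. Self-maps on 'c are ordered
  pointwise by the library order on functions (le_fun), which is exactly the order
  f \<preceq> g of the paper.\<close>

definition directed :: "'c::complete_lattice set \<Rightarrow> bool" where
  "directed D \<longleftrightarrow> D \<noteq> {} \<and> (\<forall>x\<in>D. \<forall>y\<in>D. \<exists>z\<in>D. x \<le> z \<and> y \<le> z)"

definition continuous_map :: "('c::complete_lattice \<Rightarrow> 'c) \<Rightarrow> bool" where
  "continuous_map f \<longleftrightarrow> (\<forall>D. directed D \<longrightarrow> f (Sup D) = Sup (f ` D))"

definition space_function :: "('c::complete_lattice \<Rightarrow> 'c) \<Rightarrow> bool" where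
  "space_function f \<longleftrightarrow> continuous_map f \<and> f bot = bot \<and> (\<forall>c d. f (sup c d) = sup (f c) (f d))"

definition scs :: "'g set \<Rightarrow> ('g \<Rightarrow> 'c::complete_lattice \<Rightarrow> 'c) \<Rightarrow> bool" where
  "scs G s \<longleftrightarrow> (\<forall>i\<in>G. space_function (s i))"

definition dspace :: "('g \<Rightarrow> 'c::complete_lattice \<Rightarrow> 'c) \<Rightarrow> 'g set \<Rightarrow> 'c \<Rightarrow> 'c" where
  "dspace s I = (GREATEST f. space_function f \<and> (\<forall>i\<in>I. f \<le> s i))"

definition group_distribution_candidate ::
  "'g set \<Rightarrow> ('g \<Rightarrow> 'c::complete_lattice \<Rightarrow> 'c) \<Rightarrow> ('g set \<Rightarrow> 'c \<Rightarrow> 'c) \<Rightarrow> bool" where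
  "group_distribution_candidate G s d \<longleftrightarrow>
     (\<forall>I J. I \<subseteq> G \<longrightarrow> J \<subseteq> G \<longrightarrow>
        space_function (d I)
      \<and> (\<forall>i. I = {i} \<longrightarrow> d I = s i)
      \<and> (I \<subseteq> J \<longrightarrow> d J \<le> d I))"

end

theory Submission
  imports Defs
begin

text \<open>Space functions are closed under arbitrary pointwise suprema, because suprema commute
  with suprema. Hence the space functions below every \<open>s i\<close>, \<open>i \<in> I\<close>, have a greatest element,
  their supremum \<open>\<Delta>\<^sub>I\<close>; the candidate axioms and the maximality of \<open>\<Delta>\<close> then all follow from
  this greatest-element property.\<close>

lemma continuous_map_Sup:
  fixes S :: "('c::complete_lattice \<Rightarrow> 'c) set"
  assumes "\<And>f. f \<in> S \<Longrightarrow> continuous_map f"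
  shows "continuous_map (Sup S)"
  unfolding continuous_map_def
proof (intro allI impI)
  fix D :: "'c set"
  assume "directed D"
  have "Sup S (Sup D) = (SUP f\<in>S. SUP x\<in>D. f x)"
    using assms \<open>directed D\<close> unfolding continuous_map_def by (auto intro: SUP_cong)
  also have "\<dots> = (SUP x\<in>D. SUP f\<in>S. f x)"
    by (rule SUP_commute)
  finally show "Sup S (Sup D) = Sup (Sup S ` D)"
    by (simp add: image_image)
qed

lemma space_function_Sup:
  fixes S :: "('c::complete_lattice \<Rightarrow> 'c) set"
  assumes "\<And>f. f \<in> S \<Longrightarrow> space_function f"
  shows "space_function (Sup S)"
proof -
  have "Sup S (sup c d) = sup (Sup S c) (Sup S d)" for c d
  proof -
    have "Sup S (sup c d) = (SUP f\<in>S. sup (f c) (f d))"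
      using assms unfolding space_function_def by simp
    also have "\<dots> = sup (Sup S c) (Sup S d)"
      unfolding Sup_apply by (rule Complete_Lattices.SUP_sup_distrib[symmetric])
    finally show ?thesis .
  qed
  moreover have "continuous_map (Sup S)"
    using assms by (intro continuous_map_Sup) (simp add: space_function_def)
  moreover have "Sup S bot = bot"
    using assms by (simp add: space_function_def)
  ultimately show ?thesis
    by (simp add: space_function_def)
qed

lemma dspace_eq_Sup:
  "dspace s I = Sup {f. space_function f \<and> (\<forall>i\<in>I. f \<le> s i)}"
proof -
  let ?S = "{f. space_function f \<and> (\<forall>i\<in>I. f \<le> s i)}"
  have "space_function (Sup ?S)"
    by (rule space_function_Sup) simp
  moreover have "\<forall>i\<in>I. Sup ?S \<le> s i"
    by (auto intro: Sup_least)
  ultimately show ?thesis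
    unfolding dspace_def by (intro Greatest_equality) (auto intro: Sup_upper)
qed

lemma space_function_dspace: "space_function (dspace s I)"
  unfolding dspace_eq_Sup by (rule space_function_Sup) simp

lemma dspace_le: "i \<in> I \<Longrightarrow> dspace s I \<le> s i"
  unfolding dspace_eq_Sup by (auto intro: Sup_least)

lemma le_dspace:
  assumes "space_function f" and "\<And>i. i \<in> I \<Longrightarrow> f \<le> s i"
  shows "f \<le> dspace s I"
  unfolding dspace_eq_Sup using assms by (auto intro: Sup_upper)

lemma dspace_singleton:
  assumes "space_function (s i)"
  shows "dspace s {i} = s i"
  using assms by (intro order.antisym dspace_le le_dspace) auto

lemma dspace_antimono:
  assumes "I \<subseteq> J"
  shows "dspace s J \<le> dspace s I"
  using assms by (intro le_dspace space_function_dspace dspace_le) auto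

lemma group_distribution_candidate_dspace:
  assumes "scs G s"
  shows "group_distribution_candidate G s (dspace s)"
  using assms unfolding group_distribution_candidate_def scs_def
  by (auto simp: space_function_dspace dspace_singleton dspace_antimono)

lemma group_distribution_candidate_le_dspace:
  assumes d: "group_distribution_candidate G s d" and "I \<subseteq> G"
  shows "d I \<le> dspace s I"
proof (rule le_dspace)
  show "space_function (d I)"
    using d \<open>I \<subseteq> G\<close> unfolding group_distribution_candidate_def by blast
next
  fix i
  assume "i \<in> I"
  then have "{i} \<subseteq> I" and "{i} \<subseteq> G"
    using \<open>I \<subseteq> G\<close> by auto
  then have "d I \<le> d {i}" and "d {i} = s i"
    using d \<open>I \<subseteq> G\<close> unfolding group_distribution_candidate_def by blast+
  then show "d I \<le> s i"
    by simp
qed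

theorem mainTheorem1:
  fixes G :: "'g set" and s :: "'g \<Rightarrow> 'c::complete_lattice \<Rightarrow> 'c"
  assumes "scs G s"
  shows "group_distribution_candidate G s (dspace s)
         \<and> (\<forall>d. group_distribution_candidate G s d \<longrightarrow> (\<forall>I. I \<subseteq> G \<longrightarrow> d I \<le> dspace s I))"
  using group_distribution_candidate_dspace[OF assms] group_distribution_candidate_le_dspace
  by blast

end
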